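(* Let $D$ be an indecomposable chord diagram with $|D|$ chords, let $C$ be a chord diagram, and let $k,\ell$ be integers for which the operations below are defined. Then $$\mathrm{Ins}_{D,\ell}\big(R_k(C)\big)=R_k\big(\mathrm{Ins}_{D,\ell-2}(C)\big)\quad\text{if }k\le \ell-2,$$ $$\mathrm{Ins}_{D,\ell}\big(R_k(C)\big)=R_{k+2|D|}\big(\mathrm{Ins}_{D,\ell-1}(C)\big)\quad\text{if }1\le \ell-1\le k.$$
   Context: A chord diagram of size $n$ is a perfect matching of $2n$ linearly ordered points into $n$ pairs (chords), considered up to order isomorphism; the root chord is the chord containing the first point. Its intervals are the $2n-1$ gaps between consecutive points, numbered $1,\dots,2n-1$ from left to right. A diagram is indecomposable if it is not the concatenation (side by side juxtaposition) of two nonempty diagrams. For a diagram $C$ of size $n$ and $1\le k\le 2n-1$, $R_k(C)$ is the diagram of size $n+1$ obtained by adding a new chord whose left endpoint is placed before all points of $C$ and whose right endpoint is placed in the $k$-th interval of $C$ (this chord is the new root chord). For a diagram $D'$, $\mathrm{Ins}_{D',k}(C)$ is the diagram obtained by placing all points of $D'$ (in order, with their matching) inside the $k$-th interval of $C$. *)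

theory Defs
  imports Main
begin

text \<open>A chord diagram on 2n linearly ordered points 0,...,2n-1 is represented
canonically (i.e. up to order isomorphism) by the list xs of length 2n whose
i-th entry is the partner of point i in the perfect matching.\<close>

definition chord_diagram :: "nat list \<Rightarrow> bool" where
  "chord_diagram xs \<longleftrightarrow> even (length xs) \<and>
     (\<forall>i < length xs. xs ! i < length xs \<and> xs ! i \<noteq> i \<and> xs ! (xs ! i) = i)"

definition dsize :: "nat list \<Rightarrow> nat" where
  "dsize xs = length xs div 2"

text \<open>Interval k (1 \<le> k \<le> 2n-1) is the gap between point k-1 and point k
(0-indexed), i.e. right after the first k points.\<close>

definition valid_interval :: "nat list \<Rightarrow> nat \<Rightarrow> bool" where
  "valid_interval C k \<longleftrightarrow> 1 \<le> k \<and> k \<le> 2 * dsize C - 1"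

definition concat_diag :: "nat list \<Rightarrow> nat list \<Rightarrow> nat list" where
  "concat_diag A B = A @ map (\<lambda>j. j + length A) B"

definition indecomposable :: "nat list \<Rightarrow> bool" where
  "indecomposable D \<longleftrightarrow>
     \<not> (\<exists>A B. chord_diagram A \<and> chord_diagram B \<and> A \<noteq> [] \<and> B \<noteq> [] \<and> D = concat_diag A B)"

text \<open>R_k(C): new root chord from before all points to interval k.\<close>
definition R :: "nat \<Rightarrow> nat list \<Rightarrow> nat list" where
  "R k C = (let t = (\<lambda>i. if i < k then i + 1 else i + 2) in
      (k + 1) # map (\<lambda>p. t p) (take k C) @ [0] @ map (\<lambda>p. t p) (drop k C))"

definition Ins :: "nat list \<Rightarrow> nat \<Rightarrow> nat list \<Rightarrow> nat list" where
  "Ins D k C = (let s = (\<lambda>i. if i < k then i else i + length D) in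
      map (\<lambda>p. s p) (take k C) @ map (\<lambda>j. j + k) D @ map (\<lambda>p. s p) (drop k C))"

end

theory Submission
  imports Defs
begin

text \<open>Both identities are pure bookkeeping of positions. Cut C at the two intervals involved,
  C = A @ B @ E. Inserting D and adding the root chord shift the points of A, B and E by
  the same amounts on both sides, so after unfolding the definitions the claim reduces to
  the shift maps commuting pointwise. Only the points of D need care in the second identity:
  there the new root chord ends to their right, which is where their values being below
  the length of D is used.\<close>

lemma obtain_split3:
  assumes "k \<le> j" "j \<le> length C"
  obtains A B E where "C = A @ B @ E" "length A = k" "length B = j - k"
proof
  show "C = take k C @ take (j - k) (drop k C) @ drop j C"
    using assms(1) by (metis append_take_drop_id drop_drop le_add_diff_inverse2)
qed (use assms in auto)

lemma Ins_R_right_of_root: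
  assumes "k + 2 \<le> l" "l - 2 \<le> length C"
  shows "Ins D l (R k C) = R k (Ins D (l - 2) C)"
proof -
  have k: "k \<le> l - 2"
    using assms(1) by linarith
  obtain A B E where C: "C = A @ B @ E" and A: "length A = k" and B: "length B = l - 2 - k"
    using obtain_split3[OF k assms(2)] .
  have l: "l = k + length B + 2"
    using assms(1) B by simp
  have shifts_commute: "(if (if p < k then p + 1 else p + 2) < l
        then (if p < k then p + 1 else p + 2) else (if p < k then p + 1 else p + 2) + length D)
      = (if (if p < l - 2 then p else p + length D) < k
        then (if p < l - 2 then p else p + length D) + 1
        else (if p < l - 2 then p else p + length D) + 2)" for p :: nat
    using assms(1) by auto
  have D_shift: "map (\<lambda>j. j + l) D
      = map (\<lambda>p. if p < k then p + 1 else p + 2) (map (\<lambda>j. j + (l - 2)) D)"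
    using assms(1) by auto
  show ?thesis
    unfolding C Ins_def R_def Let_def map_map comp_def shifts_commute
    using A D_shift by (simp add: l)
qed

lemma Ins_R_left_of_root:
  assumes "2 \<le> l" "l - 1 \<le> k" "k \<le> length C" and D: "\<forall>x\<in>set D. x < length D"
  shows "Ins D l (R k C) = R (k + length D) (Ins D (l - 1) C)"
proof -
  obtain A B E where C: "C = A @ B @ E" and A: "length A = l - 1" and B: "length B = k - (l - 1)"
    using obtain_split3[OF assms(2,3)] .
  have l: "l = length A + 1" and k: "k = length A + length B"
    using assms(1,2) A B by simp_all
  have shifts_commute: "(if (if p < k then p + 1 else p + 2) < l
        then (if p < k then p + 1 else p + 2) else (if p < k then p + 1 else p + 2) + length D)
      = (if (if p < l - 1 then p else p + length D) < k + length D
        then (if p < l - 1 then p else p + length D) + 1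
        else (if p < l - 1 then p else p + length D) + 2)" for p :: nat
    using assms(1,2) by auto
  have D_shift: "map (\<lambda>j. j + l) D
      = map (\<lambda>p. if p < k + length D then p + 1 else p + 2) (map (\<lambda>j. j + (l - 1)) D)"
    using assms(1,2) D by auto
  show ?thesis
    unfolding C Ins_def R_def Let_def map_map comp_def shifts_commute
    using A D_shift by (simp add: l k)
qed

lemma valid_interval_le_length: "valid_interval C k \<Longrightarrow> k \<le> length C"
  unfolding valid_interval_def dsize_def by linarith

lemma chord_diagram_length: "chord_diagram D \<Longrightarrow> length D = 2 * dsize D"
  by (auto simp: chord_diagram_def dsize_def)

lemma chord_diagram_partners_less_length: "chord_diagram D \<Longrightarrow> \<forall>x\<in>set D. x < length D"
  by (auto simp: chord_diagram_def in_set_conv_nth)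

theorem lemma3p2:
  fixes D C :: "nat list" and k l :: nat
  assumes "chord_diagram D" and "indecomposable D" and "chord_diagram C"
  shows "(k + 2 \<le> l \<and> valid_interval C k \<and> valid_interval (R k C) l
            \<and> valid_interval C (l - 2) \<and> valid_interval (Ins D (l - 2) C) k
          \<longrightarrow> Ins D l (R k C) = R k (Ins D (l - 2) C))
       \<and> (1 \<le> l - 1 \<and> l - 1 \<le> k \<and> valid_interval C k \<and> valid_interval (R k C) l
            \<and> valid_interval C (l - 1) \<and> valid_interval (Ins D (l - 1) C) (k + 2 * dsize D)
          \<longrightarrow> Ins D l (R k C) = R (k + 2 * dsize D) (Ins D (l - 1) C))"
proof (intro conjI impI)
  assume "k + 2 \<le> l \<and> valid_interval C k \<and> valid_interval (R k C) l
            \<and> valid_interval C (l - 2) \<and> valid_interval (Ins D (l - 2) C) k"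
  then show "Ins D l (R k C) = R k (Ins D (l - 2) C)"
    by (intro Ins_R_right_of_root) (auto dest: valid_interval_le_length)
next
  assume "1 \<le> l - 1 \<and> l - 1 \<le> k \<and> valid_interval C k \<and> valid_interval (R k C) l
            \<and> valid_interval C (l - 1) \<and> valid_interval (Ins D (l - 1) C) (k + 2 * dsize D)"
  then have "Ins D l (R k C) = R (k + length D) (Ins D (l - 1) C)"
    using chord_diagram_partners_less_length[OF assms(1)]
    by (intro Ins_R_left_of_root) (auto dest: valid_interval_le_length)
  then show "Ins D l (R k C) = R (k + 2 * dsize D) (Ins D (l - 1) C)"
    by (simp only: chord_diagram_length[OF assms(1)])
qed

end
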